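(* Let $X$ be a real Banach space with $\dim X\ge 2$ and let $\alpha,\beta>0$. Then $$\min\{\alpha,\beta\}\,\mu(X)\le DW_B(X,\alpha,\beta)\le 2\max\{\alpha,\beta\}\,\mu(X).$$
   Context: For $x,y\in X$, $x\perp_B y$ (Birkhoff orthogonality) means $\|x+\lambda y\|\ge\|x\|$ for all $\lambda\in\mathbb R$. For $\alpha,\beta>0$, $$DW_B(X,\alpha,\beta)=\sup\left\{\frac{\alpha\|x\|+\beta\|y\|}{\|x-y\|}\left\|\frac{x}{\|x\|}-\frac{y}{\|y\|}\right\|: x,y\in X\setminus\{0\},\ x\perp_B y\right\}.$$ The rectangular constant is $\mu(X)=\sup\left\{\frac{\|x\|+\|y\|}{\|x+y\|}: x,y\in X\setminus\{0\},\ x\perp_B y\right\}$. *)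

theory Defs
  imports "HOL-Analysis.Analysis"
begin

definition birkhoff_orth :: "'a::real_normed_vector \<Rightarrow> 'a \<Rightarrow> bool" where
  "birkhoff_orth x y \<longleftrightarrow> (\<forall>t::real. norm (x + t *\<^sub>R y) \<ge> norm x)"

definition DW_B :: "'a::real_normed_vector itself \<Rightarrow> real \<Rightarrow> real \<Rightarrow> real" where
  "DW_B X \<alpha> \<beta> = Sup {(\<alpha> * norm x + \<beta> * norm y) / norm (x - y)
        * norm (x /\<^sub>R norm x - y /\<^sub>R norm y) | x y :: 'a.
        x \<noteq> 0 \<and> y \<noteq> 0 \<and> birkhoff_orth x y}"

definition rect_const :: "'a::real_normed_vector itself \<Rightarrow> real" where
  "rect_const X = Sup {(norm x + norm y) / norm (x + y) | x y :: 'a.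
        x \<noteq> 0 \<and> y \<noteq> 0 \<and> birkhoff_orth x y}"

end

theory Submission
  imports Defs
begin

text \<open>Birkhoff orthogonality survives \<open>y \<mapsto> -y\<close>, and the DW_B quotient of \<open>(x, -y)\<close> is the
  rectangular quotient of \<open>(x, y)\<close> with \<open>\<parallel>x\<parallel> + \<parallel>y\<parallel>\<close> reweighted to \<open>\<alpha> \<parallel>x\<parallel> + \<beta> \<parallel>y\<parallel>\<close>
  (a factor between \<open>min \<alpha> \<beta>\<close> and \<open>max \<alpha> \<beta>\<close>) and multiplied by \<open>\<parallel>x/\<parallel>x\<parallel> + y/\<parallel>y\<parallel>\<parallel>\<close>. That
  factor is at most 2 by the triangle inequality and at least 1 because normalising preserves
  Birkhoff orthogonality. Both suprema are finite, as \<open>\<parallel>x\<parallel> \<le> \<parallel>x + y\<parallel>\<close> bounds the rectangular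
  quotient by 3, and range over a nonempty set: for independent u, v a minimiser t of
  \<open>\<parallel>u + t v\<parallel>\<close> makes \<open>u + t v\<close> Birkhoff orthogonal to v.\<close>

definition rect_ratio :: "'a::real_normed_vector \<Rightarrow> 'a \<Rightarrow> real" where
  "rect_ratio x y = (norm x + norm y) / norm (x + y)"

definition dw_ratio :: "real \<Rightarrow> real \<Rightarrow> 'a::real_normed_vector \<Rightarrow> 'a \<Rightarrow> real" where
  "dw_ratio \<alpha> \<beta> x y = (\<alpha> * norm x + \<beta> * norm y) / norm (x - y) * norm (sgn x - sgn y)"

definition birkhoff_pairs :: "('a::real_normed_vector \<times> 'a) set" where
  "birkhoff_pairs = {(x, y). x \<noteq> 0 \<and> y \<noteq> 0 \<and> birkhoff_orth x y}"

lemma rect_const_eq_SUP: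
  "rect_const TYPE('a::real_normed_vector) = (SUP (x, y) \<in> birkhoff_pairs. rect_ratio x (y::'a))"
  unfolding rect_const_def rect_ratio_def birkhoff_pairs_def
  by (rule arg_cong[where f = Sup]) auto

lemma DW_B_eq_SUP:
  "DW_B TYPE('a::real_normed_vector) \<alpha> \<beta> = (SUP (x, y) \<in> birkhoff_pairs. dw_ratio \<alpha> \<beta> x (y::'a))"
  unfolding DW_B_def dw_ratio_def birkhoff_pairs_def sgn_div_norm
  by (rule arg_cong[where f = Sup]) auto

lemma birkhoff_orth_scaleR:
  assumes "birkhoff_orth x y"
  shows "birkhoff_orth (a *\<^sub>R x) (b *\<^sub>R y)"
  unfolding birkhoff_orth_def
proof
  fix t :: real
  show "norm (a *\<^sub>R x) \<le> norm (a *\<^sub>R x + t *\<^sub>R b *\<^sub>R y)"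
  proof (cases "a = 0")
    case False
    have "norm x \<le> norm (x + (t * b / a) *\<^sub>R y)"
      using assms unfolding birkhoff_orth_def by blast
    hence "\<bar>a\<bar> * norm x \<le> \<bar>a\<bar> * norm (x + (t * b / a) *\<^sub>R y)"
      by (simp add: mult_left_mono)
    also have "\<dots> = norm (a *\<^sub>R x + t *\<^sub>R b *\<^sub>R y)"
      using False by (simp add: scaleR_add_right flip: norm_scaleR)
    finally show ?thesis by simp
  qed simp
qed

lemma birkhoff_orth_uminus_right: "birkhoff_orth x y \<Longrightarrow> birkhoff_orth x (- y)"
  using birkhoff_orth_scaleR[of x y 1 "-1"] by simp

lemma norm_le_norm_add_if_birkhoff_orth: "birkhoff_orth x y \<Longrightarrow> norm x \<le> norm (x + y)"
  unfolding birkhoff_orth_def by (metis scaleR_one)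

lemma birkhoff_pairs_uminus_right:
  "(x, y) \<in> birkhoff_pairs \<Longrightarrow> (x, - y) \<in> birkhoff_pairs"
  unfolding birkhoff_pairs_def by (auto intro: birkhoff_orth_uminus_right)

lemma norm_sgn_add_ge_1:
  assumes "birkhoff_orth x y" "x \<noteq> 0"
  shows "1 \<le> norm (sgn x + sgn y)"
proof -
  have "birkhoff_orth (sgn x) (sgn y)"
    using birkhoff_orth_scaleR[OF assms(1)] by (simp add: sgn_div_norm)
  thus ?thesis
    using norm_le_norm_add_if_birkhoff_orth assms(2) by (metis norm_sgn)
qed

lemma rect_ratio_le_3:
  assumes "birkhoff_orth x y" "x \<noteq> 0"
  shows "rect_ratio x y \<le> 3"
proof -
  have xy: "norm x \<le> norm (x + y)" using norm_le_norm_add_if_birkhoff_orth[OF assms(1)] .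
  have "norm y \<le> norm (x + y) + norm x"
    by (metis add_diff_cancel_left' norm_triangle_ineq4)
  hence "norm x + norm y \<le> 3 * norm (x + y)" using xy by linarith
  thus ?thesis using xy assms(2) unfolding rect_ratio_def by (simp add: divide_le_eq)
qed

lemma dw_ratio_le_rect_ratio:
  assumes "x \<noteq> 0" "y \<noteq> 0" "\<alpha> \<ge> 0" "\<beta> \<ge> 0"
  shows "dw_ratio \<alpha> \<beta> x y \<le> 2 * max \<alpha> \<beta> * rect_ratio x (- y)"
proof -
  have "\<alpha> * norm x + \<beta> * norm y \<le> max \<alpha> \<beta> * (norm x + norm y)"
    by (simp add: distrib_left add_mono mult_right_mono)
  hence weights: "(\<alpha> * norm x + \<beta> * norm y) / norm (x - y) \<le> max \<alpha> \<beta> * rect_ratio x (- y)"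
    unfolding rect_ratio_def times_divide_eq_right norm_minus_cancel diff_conv_add_uminus[symmetric]
    by (rule divide_right_mono) simp
  have "norm (sgn x - sgn y) \<le> norm (sgn x) + norm (sgn y)" by (rule norm_triangle_ineq4)
  also have "\<dots> = 2" using assms(1,2) by (simp add: norm_sgn)
  finally have "norm (sgn x - sgn y) \<le> 2" .
  moreover have "0 \<le> max \<alpha> \<beta> * rect_ratio x (- y)"
    using assms(3) by (intro mult_nonneg_nonneg) (simp_all add: rect_ratio_def)
  ultimately have "dw_ratio \<alpha> \<beta> x y \<le> max \<alpha> \<beta> * rect_ratio x (- y) * 2"
    unfolding dw_ratio_def using weights by (intro mult_mono) simp_all
  thus ?thesis by (simp only: mult.commute[of _ 2] mult.assoc)
qed

lemma rect_ratio_le_dw_ratio: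
  assumes "birkhoff_orth x y" "x \<noteq> 0" "\<alpha> \<ge> 0" "\<beta> \<ge> 0"
  shows "min \<alpha> \<beta> * rect_ratio x y \<le> dw_ratio \<alpha> \<beta> x (- y)"
proof -
  have "min \<alpha> \<beta> * (norm x + norm y) \<le> \<alpha> * norm x + \<beta> * norm y"
    by (simp add: distrib_left add_mono mult_right_mono)
  hence "min \<alpha> \<beta> * rect_ratio x y \<le> (\<alpha> * norm x + \<beta> * norm y) / norm (x + y)"
    unfolding rect_ratio_def times_divide_eq_right by (rule divide_right_mono) simp
  also have "\<dots> \<le> (\<alpha> * norm x + \<beta> * norm y) / norm (x + y) * norm (sgn x + sgn y)"
    using mult_left_mono[OF norm_sgn_add_ge_1[OF assms(1,2)], of "(\<alpha> * norm x + \<beta> * norm y) / norm (x + y)"]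
      assms(3,4) by simp
  also have "\<dots> = dw_ratio \<alpha> \<beta> x (- y)"
    unfolding dw_ratio_def by (simp add: sgn_minus)
  finally show ?thesis .
qed

lemma exists_birkhoff_orth_translate:
  fixes x y :: "'a::real_normed_vector"
  assumes "x \<noteq> 0"
  shows "\<exists>t. birkhoff_orth (y + t *\<^sub>R x) x"
proof -
  define f where "f t = norm (y + t *\<^sub>R x)" for t
  define R where "R = 2 * norm y / norm x"
  have "continuous_on {-R..R} f" unfolding f_def by (intro continuous_intros)
  moreover have "R \<ge> 0" unfolding R_def by simp
  hence "{-R..R} \<noteq> {}" by simp
  ultimately obtain t0 where t0: "t0 \<in> {-R..R}" "\<forall>t \<in> {-R..R}. f t0 \<le> f t"
    using continuous_attains_inf[OF compact_Icc] by blast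
  have min: "f t0 \<le> f t" for t
  proof (cases "t \<in> {-R..R}")
    case False
    hence "R < \<bar>t\<bar>" by auto
    hence "2 * norm y < \<bar>t\<bar> * norm x" using assms unfolding R_def by (simp add: divide_less_eq)
    moreover have "\<bar>t\<bar> * norm x - norm y \<le> f t" unfolding f_def
      by (metis norm_diff_ineq norm_scaleR real_norm_def add.commute)
    moreover have "f t0 \<le> norm y" using bspec[OF t0(2), of 0] \<open>R \<ge> 0\<close> by (simp add: f_def)
    ultimately show ?thesis by linarith
  qed (use t0 in blast)
  have "norm (y + t0 *\<^sub>R x) \<le> norm (y + t0 *\<^sub>R x + s *\<^sub>R x)" for s
    using min[of "t0 + s"] unfolding f_def by (simp add: scaleR_add_left add.assoc)
  thus ?thesis unfolding birkhoff_orth_def by blast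
qed

lemma birkhoff_pairs_nonempty:
  assumes "independent {u, v :: 'a::real_normed_vector}" "u \<noteq> v"
  shows "birkhoff_pairs \<noteq> ({} :: ('a \<times> 'a) set)"
proof -
  have u: "u \<notin> span {v}" and "independent {v}"
    using assms by (auto simp: independent_insert)
  hence "v \<noteq> 0" by (simp add: dependent_single)
  obtain t where orth: "birkhoff_orth (u + t *\<^sub>R v) v"
    using exists_birkhoff_orth_translate[OF \<open>v \<noteq> 0\<close>] by blast
  have "u + t *\<^sub>R v \<noteq> 0"
  proof
    assume "u + t *\<^sub>R v = 0"
    hence "u = (- t) *\<^sub>R v" by (simp add: eq_neg_iff_add_eq_0)
    thus False using u by (metis span_scale span_base insertI1)
  qed
  with orth \<open>v \<noteq> 0\<close> have "(u + t *\<^sub>R v, v) \<in> birkhoff_pairs"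
    unfolding birkhoff_pairs_def by simp
  thus ?thesis by blast
qed

lemma cSUP_le_mult_cSUP:
  fixes f :: "'a \<Rightarrow> real" and g :: "'b \<Rightarrow> real"
  assumes "A \<noteq> {}" "bdd_above (g ` B)" "0 \<le> c"
    and dominated: "\<And>a. a \<in> A \<Longrightarrow> \<exists>b \<in> B. f a \<le> c * g b"
  shows "bdd_above (f ` A)" and "Sup (f ` A) \<le> c * Sup (g ` B)"
proof -
  have le: "f a \<le> c * Sup (g ` B)" if a: "a \<in> A" for a
  proof -
    obtain b where "b \<in> B" "f a \<le> c * g b" using dominated[OF a] by blast
    moreover have "c * g b \<le> c * Sup (g ` B)"
      using cSUP_upper[OF \<open>b \<in> B\<close> assms(2)] assms(3) by (rule mult_left_mono)
    ultimately show ?thesis by linarith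
  qed
  show "bdd_above (f ` A)" by (rule bdd_aboveI2) (rule le)
  show "Sup (f ` A) \<le> c * Sup (g ` B)" by (rule cSUP_least[OF assms(1) le])
qed

lemma mult_cSUP_le_cSUP:
  fixes f :: "'a \<Rightarrow> real" and g :: "'b \<Rightarrow> real"
  assumes "A \<noteq> {}" "bdd_above (g ` B)" "0 < c"
    and dominated: "\<And>a. a \<in> A \<Longrightarrow> \<exists>b \<in> B. c * f a \<le> g b"
  shows "c * Sup (f ` A) \<le> Sup (g ` B)"
proof -
  have "\<exists>b \<in> B. f a \<le> inverse c * g b" if "a \<in> A" for a
    using dominated[OF that] assms(3) by (simp add: field_simps)
  hence "Sup (f ` A) \<le> inverse c * Sup (g ` B)"
    using cSUP_le_mult_cSUP(2)[OF assms(1,2)] assms(3) by simp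
  thus ?thesis using assms(3) by (simp add: field_simps)
qed

theorem theorem5:
  fixes \<alpha> \<beta> :: real
  assumes dim2: "\<exists>u v :: 'a::banach. u \<noteq> v \<and> independent {u, v}"
    and "\<alpha> > 0" and "\<beta> > 0"
  shows "min \<alpha> \<beta> * rect_const TYPE('a) \<le> DW_B TYPE('a) \<alpha> \<beta>
     \<and> DW_B TYPE('a) \<alpha> \<beta> \<le> 2 * max \<alpha> \<beta> * rect_const TYPE('a)"
proof -
  let ?P = "birkhoff_pairs :: ('a \<times> 'a) set"
  let ?S = "\<lambda>(x, y). rect_ratio x y" and ?T = "\<lambda>(x, y). dw_ratio \<alpha> \<beta> x y"
  have ne: "?P \<noteq> {}" using dim2 birkhoff_pairs_nonempty by blast
  have bddS: "bdd_above (?S ` ?P)"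
    by (rule bdd_aboveI2[where M = 3]) (auto simp: birkhoff_pairs_def rect_ratio_le_3)
  have "\<exists>q \<in> ?P. ?T p \<le> 2 * max \<alpha> \<beta> * ?S q" if "p \<in> ?P" for p
  proof (cases p)
    case (Pair x y)
    have "?T p \<le> 2 * max \<alpha> \<beta> * ?S (x, - y)"
      using that Pair assms(2,3) by (simp add: birkhoff_pairs_def dw_ratio_le_rect_ratio)
    thus ?thesis using birkhoff_pairs_uminus_right that Pair by blast
  qed
  note upper = cSUP_le_mult_cSUP[OF ne bddS, of "2 * max \<alpha> \<beta>", OF _ this]
  have "\<exists>q \<in> ?P. min \<alpha> \<beta> * ?S p \<le> ?T q" if "p \<in> ?P" for p
  proof (cases p)
    case (Pair x y)
    have "min \<alpha> \<beta> * ?S p \<le> ?T (x, - y)"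
      using that Pair assms(2,3) by (simp add: birkhoff_pairs_def rect_ratio_le_dw_ratio)
    thus ?thesis using birkhoff_pairs_uminus_right that Pair by blast
  qed
  with upper(1) have "min \<alpha> \<beta> * Sup (?S ` ?P) \<le> Sup (?T ` ?P)"
    using assms(2,3) by (intro mult_cSUP_le_cSUP[OF ne]) auto
  with upper(2) assms(2,3) show ?thesis
    unfolding rect_const_eq_SUP DW_B_eq_SUP by simp
qed

end
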